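(* Let $y=X\beta+\varepsilon$, where $X\in\mathbb{R}^{m\times n}$ ($m>n$) has full column rank, $\beta\in\mathbb{R}^n$ is fixed, and $\varepsilon$ is a random vector in $\mathbb{R}^m$ that is symmetrically distributed (i.e. $\varepsilon$ and $-\varepsilon$ have the same distribution). Run Algorithm 3 (PCG-Aug) with $w_1=0$ and a fixed deterministic $z_1\in\mathbb{R}^n$, and define $\hat z_i=X^{\star T}(y-\Sigma w_i)$. Fix $i$ and assume that almost surely the iterates up to index $i$ are defined (i.e. $d_j\neq0$ and $c_j\neq0$ for $j<i$) and that $w_i$ is integrable. Then $$\mathbb{E}[\hat z_i]=\beta\qquad\text{and}\qquad \mathbb{E}[w_i]=0.$$
   Context: $\Sigma\in\mathbb{R}^{m\times m}$ is symmetric (the covariance of $\varepsilon$ in the intended application), $D\in\mathbb{R}^{m\times m}$ is symmetric non-singular with $X^TD^{-1}X$ non-singular, $X^\star=D^{-1}X(X^TD^{-1}X)^{-1}$, $\Pi=(I_m-X^\star X^T)D^{-1}$. Algorithm 3 (PCG-Aug): given $z_1\in\mathbb{R}^n$ and $w_1$ with $X^Tw_1=0$, set $r_1=\Sigma w_1+Xz_1-y$, $c_1=r_1^T\Pi r_1$, $u_1=\Pi r_1$, $v_1=X^{\star T}r_1$; for $i=1,2,\dots$: $d_i=u_i^T\Sigma u_i$, $\lambda_i=c_i/d_i$, $w_{i+1}=w_i-\lambda_iu_i$, $r_{i+1}=r_i-\lambda_i(\Sigma u_i+Xv_i)$, $c_{i+1}=r_{i+1}^T\Pi r_{i+1}$,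 $\mu_i=c_{i+1}/c_i$, $v_{i+1}=X^{\star T}r_{i+1}+\mu_iv_i$, $u_{i+1}=\Pi r_{i+1}+\mu_iu_i$. Exact arithmetic. *)

theory Defs
  imports "HOL-Analysis.Analysis" "HOL-Probability.Probability"
begin

text \<open>Matrices are Cartesian-space matrices: real^'c^'r has rows indexed by 'r.
  X :: real^'n^'m is the m x n design matrix; D, Sigma :: real^'m^'m.\<close>

definition Xstar :: "real^'m^'m \<Rightarrow> real^'n^'m \<Rightarrow> real^'n^'m" where
  "Xstar D X = matrix_inv D ** X ** matrix_inv (transpose X ** matrix_inv D ** X)"

definition PiM :: "real^'m^'m \<Rightarrow> real^'n^'m \<Rightarrow> real^'m^'m" where
  "PiM D X = (mat 1 - Xstar D X ** transpose X) ** matrix_inv D"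

record ('m::finite, 'n::finite) pcg_state =
  pw :: "real^'m"
  pr :: "real^'m"
  pc :: real
  pu :: "real^'m"
  pv :: "real^'n"

definition pcg_init :: "real^'m^'m \<Rightarrow> real^'m^'m \<Rightarrow> real^'n^'m \<Rightarrow> real^'m
    \<Rightarrow> real^'n \<Rightarrow> real^'m \<Rightarrow> ('m, 'n) pcg_state" where
  "pcg_init S D X y z1 w1 =
     (let r1 = S *v w1 + X *v z1 - y
      in \<lparr> pw = w1, pr = r1, pc = r1 \<bullet> (PiM D X *v r1),
           pu = PiM D X *v r1, pv = transpose (Xstar D X) *v r1 \<rparr>)"

definition pcg_d :: "real^'m^'m \<Rightarrow> ('m, 'n::finite) pcg_state \<Rightarrow> real" where
  "pcg_d S st = pu st \<bullet> (S *v pu st)"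

definition pcg_step :: "real^'m^'m \<Rightarrow> real^'m^'m \<Rightarrow> real^'n^'m
    \<Rightarrow> ('m, 'n) pcg_state \<Rightarrow> ('m, 'n) pcg_state" where
  "pcg_step S D X st =
     (let d = pcg_d S st;
          lam = pc st / d;
          w' = pw st - lam *\<^sub>R pu st;
          r' = pr st - lam *\<^sub>R (S *v pu st + X *v pv st);
          c' = r' \<bullet> (PiM D X *v r');
          mu = c' / pc st;
          v' = transpose (Xstar D X) *v r' + mu *\<^sub>R pv st;
          u' = PiM D X *v r' + mu *\<^sub>R pu st
      in \<lparr> pw = w', pr = r', pc = c', pu = u', pv = v' \<rparr>)"

text \<open>The state at (1-based) iteration index i \<ge> 1.\<close>
definition pcg_iter :: "real^'m^'m \<Rightarrow> real^'m^'m \<Rightarrow> real^'n^'m \<Rightarrow> real^'m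
    \<Rightarrow> real^'n \<Rightarrow> real^'m \<Rightarrow> nat \<Rightarrow> ('m, 'n) pcg_state" where
  "pcg_iter S D X y z1 w1 i = (pcg_step S D X ^^ (i - 1)) (pcg_init S D X y z1 w1)"

definition symmetric_distr :: "'a measure \<Rightarrow> ('a \<Rightarrow> 'b::{real_normed_vector, topological_space}) \<Rightarrow> bool" where
  "symmetric_distr M e \<longleftrightarrow> distr M borel e = distr M borel (\<lambda>\<omega>. - e \<omega>)"

end

theory Submission
  imports Defs
begin

text \<open>Flipping the noise, y = X beta + eps \<mapsto> X beta - eps = - y + X (2 beta), negates the
  initial residual modulo the range of X. Since \<Pi> annihilates that range on both sides, the
  whole run is mirrored: w_i and u_i change sign, c_i and d_i are unchanged, and the
  residuals agree up to sign modulo range X. So w_i is an odd measurable function of eps and has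
  mean zero when eps is symmetric, and then
  E[X*^T (y - \<Sigma> w_i)] = X*^T X beta = beta.\<close>

lemma matrix_diff_rdistrib: "(A - B) ** C = A ** C - B ** (C :: 'a::ring_1^'p^'n)"
  by (simp add: matrix_matrix_mult_def vec_eq_iff algebra_simps sum_subtractf)

lemma matrix_diff_ldistrib: "A ** (B - C) = A ** B - A ** (C :: 'a::ring_1^'p^'n)"
  by (simp add: matrix_matrix_mult_def vec_eq_iff algebra_simps sum_subtractf)

lemma matrix_inv_right: "invertible A \<Longrightarrow> A ** matrix_inv A = mat 1"
  and matrix_inv_left: "invertible A \<Longrightarrow> matrix_inv A ** A = mat 1"
  using someI_ex[of "\<lambda>A'. A ** A' = mat 1 \<and> A' ** A = mat 1"]
  unfolding invertible_def matrix_inv_def by auto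

lemma transpose_matrix_inv_symmetric:
  fixes A :: "'a::comm_ring_1^'n^'n"
  assumes "invertible A" "transpose A = A"
  shows "transpose (matrix_inv A) = matrix_inv A"
proof -
  have left_inv: "transpose (matrix_inv A) ** A = mat 1"
    by (metis assms matrix_inv_right matrix_transpose_mul transpose_mat)
  have "transpose (matrix_inv A) = transpose (matrix_inv A) ** (A ** matrix_inv A)"
    using matrix_inv_right[OF assms(1)] by simp
  also have "\<dots> = matrix_inv A"
    by (simp add: matrix_mul_assoc left_inv)
  finally show ?thesis .
qed


lemma PiM_mult_X:
  assumes "invertible (transpose X ** matrix_inv D ** X)"
  shows "PiM D X ** X = 0"
proof -
  let ?G = "transpose X ** matrix_inv D ** X"
  have "PiM D X ** X = matrix_inv D ** X - matrix_inv D ** X ** (matrix_inv ?G ** ?G)"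
    unfolding PiM_def Xstar_def by (simp add: matrix_mul_assoc matrix_diff_rdistrib)
  then show ?thesis
    using matrix_inv_left[OF assms] by simp
qed


lemma transpose_X_mult_PiM:
  assumes "invertible (transpose X ** matrix_inv D ** X)"
  shows "transpose X ** PiM D X = 0"
proof -
  let ?G = "transpose X ** matrix_inv D ** X"
  have "transpose X ** PiM D X
      = transpose X ** matrix_inv D - (?G ** matrix_inv ?G) ** transpose X ** matrix_inv D"
    unfolding PiM_def Xstar_def
    by (simp add: matrix_mul_assoc matrix_diff_ldistrib matrix_diff_rdistrib)
  then show ?thesis
    using matrix_inv_right[OF assms] by simp
qed


lemma transpose_Xstar_mult_X:
  assumes "invertible (transpose X ** matrix_inv D ** X)" "invertible D" "transpose D = D"
  shows "transpose (Xstar D X) ** X = mat 1"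
proof -
  let ?G = "transpose X ** matrix_inv D ** X"
  have D_inv_sym: "transpose (matrix_inv D) = matrix_inv D"
    using assms(2,3) by (rule transpose_matrix_inv_symmetric)
  then have "transpose ?G = ?G"
    by (simp add: matrix_transpose_mul matrix_mul_assoc)
  then have "transpose (matrix_inv ?G) = matrix_inv ?G"
    using assms(1) transpose_matrix_inv_symmetric by blast
  moreover have "transpose (Xstar D X) ** X = transpose (matrix_inv ?G) ** ?G"
    unfolding Xstar_def using D_inv_sym by (simp add: matrix_transpose_mul matrix_mul_assoc)
  ultimately show ?thesis
    using matrix_inv_left[OF assms(1)] by simp
qed

lemma annihilator_range_orthogonal:
  fixes X :: "real^'n^'m" and P :: "real^'m^'m"
  assumes "transpose X ** P = 0"
  shows "(X *v k) \<bullet> (P *v r) = 0"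
proof -
  have "(X *v k) \<bullet> (P *v r) = k \<bullet> ((transpose X ** P) *v r)"
    by (metis dot_lmul_matrix matrix_vector_mul_assoc vector_transpose_matrix)
  then show ?thesis
    using assms by simp
qed

lemma annihilator_neg_plus_range:
  fixes X :: "real^'n^'m" and P :: "real^'m^'m"
  assumes "P ** X = 0"
  shows "P *v (- r + X *v k) = - (P *v r)"
  by (simp only: matrix_vector_right_distrib matrix_vector_mul_assoc assms
      linear_neg[OF matrix_vector_mul_linear]) simp

text \<open>The directions v_i enter the residual only through X v_i, so they are absorbed into the
  range-of-X part of the residual and need no constraint.\<close>

definition pcg_mirror ::
    "real^'n^'m \<Rightarrow> ('m::finite, 'n::finite) pcg_state \<Rightarrow> ('m, 'n) pcg_state \<Rightarrow> bool" where
  "pcg_mirror X s s' \<longleftrightarrow>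
     pw s' = - pw s \<and> pu s' = - pu s \<and> pc s' = pc s \<and> (\<exists>k. pr s' = - pr s + X *v k)"

lemma pcg_mirror_step:
  assumes PX: "PiM D X ** X = 0" "transpose X ** PiM D X = 0"
    and "pcg_mirror X s s'"
  shows "pcg_mirror X (pcg_step S D X s) (pcg_step S D X s')"
proof -
  obtain k where k: "pr s' = - pr s + X *v k"
    using assms(3) unfolding pcg_mirror_def by blast
  have u: "pu s' = - pu s" and w: "pw s' = - pw s" and c: "pc s' = pc s"
    using assms(3) unfolding pcg_mirror_def by auto
  have d: "pcg_d S s' = pcg_d S s"
    unfolding pcg_d_def u by (simp add: linear_neg[OF matrix_vector_mul_linear])
  define lam where "lam = pc s / pcg_d S s"
  define r where "r = pr s - lam *\<^sub>R (S *v pu s + X *v pv s)"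
  have r': "pr s' - lam *\<^sub>R (S *v pu s' + X *v pv s')
      = - r + X *v (k - lam *\<^sub>R pv s' - lam *\<^sub>R pv s)"
    unfolding r_def k u
    by (simp add: algebra_simps linear_neg[OF matrix_vector_mul_linear] matrix_vector_mult_scaleR)
  show ?thesis
    unfolding pcg_mirror_def pcg_step_def Let_def d c lam_def[symmetric] r_def[symmetric] r'
    by (simp only: annihilator_neg_plus_range[OF PX(1)] u w)
       (auto simp: inner_diff_left annihilator_range_orthogonal[OF PX(2)])
qed

lemma pcg_mirror_init:
  assumes PX: "PiM D X ** X = 0" "transpose X ** PiM D X = 0"
  shows "pcg_mirror X (pcg_init S D X y z1 0) (pcg_init S D X (- y + X *v k) z1 0)"
proof -
  define r where "r = S *v 0 + X *v z1 - y"
  have r': "S *v 0 + X *v z1 - (- y + X *v k) = - r + X *v (z1 + z1 - k)"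
    unfolding r_def
    by (simp only: matrix_vector_mult_diff_distrib matrix_vector_right_distrib)
       (simp add: vec_eq_iff)
  show ?thesis
    unfolding pcg_mirror_def pcg_init_def Let_def r_def[symmetric] r'
    by (simp only: annihilator_neg_plus_range[OF PX(1)])
       (auto simp: inner_diff_left annihilator_range_orthogonal[OF PX(2)])
qed

lemma pcg_mirror_iter:
  assumes PX: "PiM D X ** X = 0" "transpose X ** PiM D X = 0"
  shows "pcg_mirror X (pcg_iter S D X y z1 0 i) (pcg_iter S D X (- y + X *v k) z1 0 i)"
proof -
  have "pcg_mirror X ((pcg_step S D X ^^ n) (pcg_init S D X y z1 0))
                     ((pcg_step S D X ^^ n) (pcg_init S D X (- y + X *v k) z1 0))" for n
  proof (induction n)
    case 0
    show ?case
      by (simp only: funpow_0) (rule pcg_mirror_init[OF PX])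
  next
    case (Suc n)
    then show ?case
      by (simp only: funpow.simps(2) o_apply) (rule pcg_mirror_step[OF PX])
  qed
  then show ?thesis
    unfolding pcg_iter_def .
qed

lemma borel_measurable_matrix_vector_mult [measurable (raw)]:
  fixes A :: "real^'n^'m"
  assumes "f \<in> borel_measurable M"
  shows "(\<lambda>x. A *v f x) \<in> borel_measurable M"
  by (rule borel_measurable_continuous_on[OF linear_continuous_on assms]) simp

lemma pcg_iter_w_measurable:
  "(\<lambda>y. pw (pcg_iter S D X y z1 w1 i)) \<in> borel_measurable borel"
proof -
  have "(\<lambda>y. pw ((pcg_step S D X ^^ n) (pcg_init S D X y z1 w1))) \<in> borel_measurable borel \<and>
        (\<lambda>y. pr ((pcg_step S D X ^^ n) (pcg_init S D X y z1 w1))) \<in> borel_measurable borel \<and>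
        (\<lambda>y. pc ((pcg_step S D X ^^ n) (pcg_init S D X y z1 w1))) \<in> borel_measurable borel \<and>
        (\<lambda>y. pu ((pcg_step S D X ^^ n) (pcg_init S D X y z1 w1))) \<in> borel_measurable borel \<and>
        (\<lambda>y. pv ((pcg_step S D X ^^ n) (pcg_init S D X y z1 w1))) \<in> borel_measurable borel" for n
  proof (induction n)
    case 0
    show ?case
      unfolding pcg_init_def Let_def by (simp del: transpose_matrix_vector) measurable
  next
    case (Suc n)
    define st where "st y = (pcg_step S D X ^^ n) (pcg_init S D X y z1 w1)" for y
    have [measurable]:
      "(\<lambda>y. pw (st y)) \<in> borel_measurable borel" "(\<lambda>y. pr (st y)) \<in> borel_measurable borel"
      "(\<lambda>y. pc (st y)) \<in> borel_measurable borel" "(\<lambda>y. pu (st y)) \<in> borel_measurable borel"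
      "(\<lambda>y. pv (st y)) \<in> borel_measurable borel"
      using Suc.IH unfolding st_def by auto
    have st_Suc: "(pcg_step S D X ^^ Suc n) (pcg_init S D X y z1 w1) = pcg_step S D X (st y)" for y
      unfolding st_def by simp
    show ?case
      unfolding st_Suc unfolding pcg_step_def pcg_d_def Let_def pcg_state.select_convs
      by (intro conjI; measurable)
  qed
  then show ?thesis
    unfolding pcg_iter_def by blast
qed

lemma integral_odd_symmetric_distr:
  fixes e :: "'a \<Rightarrow> 'b::{real_normed_vector, second_countable_topology}"
    and h :: "'b \<Rightarrow> 'c::{banach, second_countable_topology}"
  assumes "e \<in> borel_measurable M" "symmetric_distr M e"
    and "h \<in> borel_measurable borel" "\<And>x. h (- x) = - h x"
  shows "integral\<^sup>L M (\<lambda>\<omega>. h (e \<omega>)) = 0"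
proof -
  have "(\<lambda>\<omega>. - e \<omega>) \<in> borel_measurable M"
    using assms(1) by measurable
  then have "integral\<^sup>L M (\<lambda>\<omega>. h (e \<omega>)) = integral\<^sup>L M (\<lambda>\<omega>. h (- e \<omega>))"
    using assms(1-3) unfolding symmetric_distr_def by (metis integral_distr)
  also have "\<dots> = - integral\<^sup>L M (\<lambda>\<omega>. h (e \<omega>))"
    by (simp add: assms(4))
  finally show ?thesis
    by (simp add: eq_neg_iff_add_eq_0 flip: scaleR_2)
qed

lemma (in prob_space) expectation_affine_matrix_vector_mult:
  fixes f :: "'a \<Rightarrow> real^'m" and g :: "'a \<Rightarrow> real^'k"
    and A :: "real^'m^'n" and B :: "real^'k^'m"
  assumes "integrable M f" "integrable M g"
  shows "expectation (\<lambda>\<omega>. A *v (c + f \<omega> - B *v g \<omega>))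
       = A *v (c + expectation f - B *v expectation g)"
proof -
  have Bg: "integrable M (\<lambda>\<omega>. B *v g \<omega>)" and "expectation (\<lambda>\<omega>. B *v g \<omega>) = B *v expectation g"
    using assms(2) by (simp_all add: integrable_bounded_linear integral_bounded_linear)
  moreover have "integrable M (\<lambda>\<omega>. c + f \<omega> - B *v g \<omega>)"
    using assms(1) Bg by simp
  ultimately show ?thesis
    using assms(1) by (simp add: integral_bounded_linear[OF matrix_vector_mul_bounded_linear] prob_space)
qed

theorem mainTheorem7:
  fixes M :: "'a measure"
    and X :: "real^'n^'m" and beta :: "real^'n"
    and eps :: "'a \<Rightarrow> real^'m"
    and S D :: "real^'m^'m" and z1 :: "real^'n" and i :: nat
  assumes "prob_space M"
    and "CARD('m) > CARD('n)"
    and "rank X = CARD('n)"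
    and "transpose S = S"
    and "transpose D = D" and "invertible D"
    and "invertible (transpose X ** matrix_inv D ** X)"
    and "eps \<in> borel_measurable M"
    and "integrable M eps"
    and "symmetric_distr M eps"
    and "i \<ge> 1"
    and "AE \<omega> in M. \<forall>j. 1 \<le> j \<and> j < i \<longrightarrow>
           pcg_d S (pcg_iter S D X (X *v beta + eps \<omega>) z1 0 j) \<noteq> 0 \<and>
           pc (pcg_iter S D X (X *v beta + eps \<omega>) z1 0 j) \<noteq> 0"
    and "integrable M (\<lambda>\<omega>. pw (pcg_iter S D X (X *v beta + eps \<omega>) z1 0 i))"
  shows "prob_space.expectation M (\<lambda>\<omega>. transpose (Xstar D X) *v
             ((X *v beta + eps \<omega>) - S *v pw (pcg_iter S D X (X *v beta + eps \<omega>) z1 0 i))) = beta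
         \<and> prob_space.expectation M (\<lambda>\<omega>. pw (pcg_iter S D X (X *v beta + eps \<omega>) z1 0 i)) = 0"
proof -
  \<comment> \<open>Division is total (x / 0 = 0).\<close>
  interpret prob_space M by fact
  have PX: "PiM D X ** X = 0" "transpose X ** PiM D X = 0"
    using assms(7) by (rule PiM_mult_X, rule transpose_X_mult_PiM)
  define w where "w e = pw (pcg_iter S D X (X *v beta + e) z1 0 i)" for e
  have w_odd: "w (- e) = - w e" for e
  proof -
    have "X *v beta + - e = - (X *v beta + e) + X *v (beta + beta)"
      by (simp only: matrix_vector_right_distrib) (simp add: vec_eq_iff)
    then show ?thesis
      using pcg_mirror_iter[OF PX] unfolding w_def pcg_mirror_def by metis
  qed
  have w_measurable: "w \<in> borel_measurable borel"
    unfolding w_def by (rule measurable_compose[OF _ pcg_iter_w_measurable]) simp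
  have Ew: "expectation (\<lambda>\<omega>. w (eps \<omega>)) = 0"
    using assms(8,10) w_measurable w_odd by (rule integral_odd_symmetric_distr)
  have Eeps: "expectation eps = 0"
    using integral_odd_symmetric_distr[OF assms(8,10), of id] by simp
  have w_integrable: "integrable M (\<lambda>\<omega>. w (eps \<omega>))"
    using assms(13) unfolding w_def .
  have "expectation (\<lambda>\<omega>. transpose (Xstar D X) *v (X *v beta + eps \<omega> - S *v w (eps \<omega>)))
      = transpose (Xstar D X) *v (X *v beta)"
    unfolding expectation_affine_matrix_vector_mult[OF assms(9) w_integrable] Ew Eeps by simp
  also have "\<dots> = beta"
    using transpose_Xstar_mult_X[OF assms(7,6,5)] by (simp add: matrix_vector_mul_assoc)
  finally show ?thesis
    using Ew unfolding w_def by simp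
qed

end
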